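(* Let $\alpha,\beta\in(0,1]$ and let $L(t,u,v,w):\mathbb{T}^\kappa\times\mathbb{R}^3\to\mathbb{R}$ have continuous second-order partial derivatives in $(u,v,w)$. Consider problem (P): minimize $$\mathcal{L}(y)=\sum_{t=a}^{b-1}L\bigl(t,y(t+1),({}_a\Delta_t^\alpha y)(t),({}_t\Delta_b^\beta y)(t)\bigr)$$ over $y:\mathbb{T}\to\mathbb{R}$ with $y(a)=A$, $y(b)=B$ ($A,B\in\mathbb{R}$ fixed). If $\tilde y$ is a local minimizer for (P), then for all $t\in\mathbb{T}^{\kappa^2}=\{a,\dots,b-2\}$, $$L_u[\tilde y](t)+\bigl({}_t\Delta_{\rho(b)}^{\alpha}L_v[\tilde y]\bigr)(t)+\bigl({}_a\Delta_t^{\beta}L_w[\tilde y]\bigr)(t)=0,$$ where $[y](s)=(s,y(s+1),({}_a\Delta_s^\alpha y)(s),({}_s\Delta_b^\beta y)(s))$ and $L_v[\tilde y]$, $L_w[\tilde y]$ denote the functions $s\mapsto L_v([\tilde y](s))$, $s\mapsto L_w([\tilde y](s))$ on $\{a,\dots,b-1\}$.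
   Context: Let $a\in\mathbb{R}$, $b=a+k$ with $k\in\mathbb{N}$, $k\ge2$, $\mathbb{T}=\{a,\dots,b\}$, $\mathbb{T}^\kappa=\{a,\dots,b-1\}$, $\sigma(t)=t+1$, $\rho(t)=t-1$, $\Delta g(t)=g(t+1)-g(t)$. For real $x,y$, $x^{(y)}:=\Gamma(x+1)/\Gamma(x+1-y)$ (division at a pole yields zero). For $c\in\mathbb{T}$, $g$ on $\{a,\dots,c\}$, $\nu\ge0$: $({}_a\Delta_t^{-\nu}g)(t):=g(t)+\frac{\nu}{\Gamma(\nu+1)}\sum_{s=a}^{t-1}(t+\nu-\sigma(s))^{(\nu-1)}g(s)$ and $({}_t\Delta_c^{-\nu}g)(t):=g(t)+\frac{\nu}{\Gamma(\nu+1)}\sum_{s=t+1}^{c}(s+\nu-\sigma(t))^{(\nu-1)}g(s)$, $t\in\{a,\dots,c\}$. For $0<\alpha\le1$, $\mu=1-\alpha$, and $t\in\{a,\dots,c-1\}$: $({}_a\Delta_t^{\alpha}g)(t):=\Delta({}_a\Delta^{-\mu}g)(t)$, $({}_t\Delta_c^{\alpha}g)(t):=-\Delta({}_t\Delta_c^{-\mu}g)(t)$. Norm on functions $y:\mathbb{T}\to\mathbb{R}$: $\|y\|=\max_{t\in\mathbb{T}^\kappa}|y(t+1)|+\max_{t\in\mathbb{T}^\kappa}|({}_a\Delta_t^\alpha y)(t)|+\max_{t\in\mathbb{T}^\kappa}|({}_t\Delta_b^\beta y)(t)|$. A function $\tilde y$ with $\tilde y(a)=A$, $\tilde y(b)=B$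 is a local minimizer for (P) if there is $\delta>0$ with $\mathcal{L}(\tilde y)\le\mathcal{L}(y)$ for all $y$ with $y(a)=A$, $y(b)=B$, $\|y-\tilde y\|<\delta$. *)

theory Defs
  imports "HOL-Analysis.Analysis"
begin

text \<open>Time scale T = {a, a+1, ..., a+k} (b = a+k) and T^kappa = {a, ..., a+k-1}.\<close>

definition tscale :: "real \<Rightarrow> nat \<Rightarrow> real set" where
  "tscale a k = (\<lambda>i. a + real i) ` {0..k}"

definition tscale_kappa :: "real \<Rightarrow> nat \<Rightarrow> real set" where
  "tscale_kappa a k = (\<lambda>i. a + real i) ` {0..<k}"

text \<open>Generalized falling power x^(y) = Gamma(x+1)/Gamma(x+1-y).  In HOL-Analysis
  Gamma is 0 at its poles and division by 0 is 0, so division at a pole yields zero.\<close>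

definition gpow :: "real \<Rightarrow> real \<Rightarrow> real" where
  "gpow x y = Gamma (x + 1) / Gamma (x + 1 - y)"

definition left_fsum :: "real \<Rightarrow> real \<Rightarrow> (real \<Rightarrow> real) \<Rightarrow> real \<Rightarrow> real" where
  "left_fsum a \<nu> g t = g t + \<nu> / Gamma (\<nu> + 1) *
     (\<Sum>i\<in>{0..<nat \<lfloor>t - a\<rfloor>}. gpow (t + \<nu> - (a + real i + 1)) (\<nu> - 1) * g (a + real i))"

definition right_fsum :: "real \<Rightarrow> real \<Rightarrow> (real \<Rightarrow> real) \<Rightarrow> real \<Rightarrow> real" where
  "right_fsum c \<nu> g t = g t + \<nu> / Gamma (\<nu> + 1) *
     (\<Sum>i\<in>{1..nat \<lfloor>c - t\<rfloor>}. gpow ((t + real i) + \<nu> - (t + 1)) (\<nu> - 1) * g (t + real i))"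

definition left_fdiff :: "real \<Rightarrow> real \<Rightarrow> (real \<Rightarrow> real) \<Rightarrow> real \<Rightarrow> real" where
  "left_fdiff a \<alpha> g t = left_fsum a (1 - \<alpha>) g (t + 1) - left_fsum a (1 - \<alpha>) g t"

definition right_fdiff :: "real \<Rightarrow> real \<Rightarrow> (real \<Rightarrow> real) \<Rightarrow> real \<Rightarrow> real" where
  "right_fdiff c \<alpha> g t = - (right_fsum c (1 - \<alpha>) g (t + 1) - right_fsum c (1 - \<alpha>) g t)"

definition fnorm :: "real \<Rightarrow> nat \<Rightarrow> real \<Rightarrow> real \<Rightarrow> (real \<Rightarrow> real) \<Rightarrow> real" where
  "fnorm a k \<alpha> \<beta> y =
     Max ((\<lambda>t. \<bar>y (t + 1)\<bar>) ` tscale_kappa a k)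
   + Max ((\<lambda>t. \<bar>left_fdiff a \<alpha> y t\<bar>) ` tscale_kappa a k)
   + Max ((\<lambda>t. \<bar>right_fdiff (a + real k) \<beta> y t\<bar>) ` tscale_kappa a k)"

definition funct ::
  "(real \<Rightarrow> real \<Rightarrow> real \<Rightarrow> real \<Rightarrow> real) \<Rightarrow> real \<Rightarrow> nat \<Rightarrow> real \<Rightarrow> real \<Rightarrow> (real \<Rightarrow> real) \<Rightarrow> real" where
  "funct L a k \<alpha> \<beta> y =
     (\<Sum>i<k. L (a + real i) (y (a + real i + 1))
                (left_fdiff a \<alpha> y (a + real i)) (right_fdiff (a + real k) \<beta> y (a + real i)))"

definition local_minimizer ::
  "(real \<Rightarrow> real \<Rightarrow> real \<Rightarrow> real \<Rightarrow> real) \<Rightarrow> real \<Rightarrow> nat \<Rightarrow> real \<Rightarrow> real \<Rightarrow> real \<Rightarrow> real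
   \<Rightarrow> (real \<Rightarrow> real) \<Rightarrow> bool" where
  "local_minimizer L a k \<alpha> \<beta> A B yt \<longleftrightarrow>
     yt a = A \<and> yt (a + real k) = B \<and>
     (\<exists>\<delta>>0. \<forall>y. y a = A \<and> y (a + real k) = B \<and> fnorm a k \<alpha> \<beta> (\<lambda>t. y t - yt t) < \<delta>
               \<longrightarrow> funct L a k \<alpha> \<beta> yt \<le> funct L a k \<alpha> \<beta> y)"

definition cont_partials :: "(real \<Rightarrow> real \<Rightarrow> real \<Rightarrow> real) \<Rightarrow> bool" where
  "cont_partials f \<longleftrightarrow> (\<exists>fu fv fw.
     (\<forall>u v w. ((\<lambda>x. f x v w) has_real_derivative fu u v w) (at u)
            \<and> ((\<lambda>x. f u x w) has_real_derivative fv u v w) (at v)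
            \<and> ((\<lambda>x. f u v x) has_real_derivative fw u v w) (at w))
     \<and> continuous_on UNIV (\<lambda>(u, v, w). fu u v w)
     \<and> continuous_on UNIV (\<lambda>(u, v, w). fv u v w)
     \<and> continuous_on UNIV (\<lambda>(u, v, w). fw u v w))"

end

theory Submission
  imports Defs
begin

(*
  Fix a point t = a + j of T^kappa^2 and perturb the minimizer in the direction of the unit
  impulse eta at a + (j + 1); eta vanishes at both end points, so y~ + e * eta is admissible,
  and since all fractional operators are linear the norm of the perturbation is |e| times
  the norm of eta.  Hence e = 0 is a local minimum of phi(e) = L(y~ + e * eta) and
  phi'(0) = 0 (Fermat's rule).  The first part of the file computes phi'(0) by the chain
  rule (continuous partial derivatives give Frechet differentiability); the second part
  evaluates the three resulting sums by a discrete fractional summation by parts: the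
  u-sum picks out L_u at t, the sum against the left difference of eta becomes a right
  fractional difference of L_v with end point b - 1, and the sum against the right
  difference of eta becomes a left fractional difference of L_w.
*)

section \<open>Differentiability from continuous partial derivatives\<close>

lemma has_derivative_from_partials2:
  fixes g gv gw :: "real \<Rightarrow> real \<Rightarrow> real"
  assumes dv: "\<And>v w. ((\<lambda>x. g x w) has_real_derivative gv v w) (at v)"
    and dw: "\<And>v w. ((\<lambda>x. g v x) has_real_derivative gw v w) (at w)"
    and cw: "continuous_on UNIV (\<lambda>(v, w). gw v w)"
  shows "((\<lambda>(v, w). g v w) has_derivative (\<lambda>(dv, dw). gv v w * dv + gw v w * dw)) (at (v, w))"
proof -
  have "continuous (at (v, w)) (\<lambda>(x, y). gw x y)"
    using cw by (simp add: continuous_on_eq_continuous_at)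
  then have "continuous (at (v, w)) (\<lambda>p. blinfun_mult_left ((\<lambda>(x, y). gw x y) p))"
    by (intro continuous_intros bounded_linear.continuous[OF bounded_linear_blinfun_mult_left])
  then have cont: "continuous (at (v, w) within UNIV \<times> UNIV) (\<lambda>(x, y). blinfun_mult_left (gw x y))"
    by (simp add: split_beta')
  have "((\<lambda>(x, y). g x y) has_derivative
          (\<lambda>(tx, ty). gv v w * tx + blinfun_mult_left (gw v w) ty)) (at (v, w) within UNIV \<times> UNIV)"
    by (rule has_derivative_partialsI[where fy = "\<lambda>x y. blinfun_mult_left (gw x y)"])
      (use dv[unfolded has_field_derivative_def] dw[unfolded has_field_derivative_def] cont
        in \<open>auto simp: mult.commute[of _ "gw _ _"]\<close>)
  then show ?thesis by (simp add: mult.commute case_prod_beta)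
qed

lemma has_derivative_from_partials3:
  fixes g gu gv gw :: "real \<Rightarrow> real \<Rightarrow> real \<Rightarrow> real"
  assumes du: "\<And>u v w. ((\<lambda>x. g x v w) has_real_derivative gu u v w) (at u)"
    and dv: "\<And>u v w. ((\<lambda>x. g u x w) has_real_derivative gv u v w) (at v)"
    and dw: "\<And>u v w. ((\<lambda>x. g u v x) has_real_derivative gw u v w) (at w)"
    and cv: "continuous_on UNIV (\<lambda>(u, v, w). gv u v w)"
    and cw: "continuous_on UNIV (\<lambda>(u, v, w). gw u v w)"
  shows "((\<lambda>(u, v, w). g u v w) has_derivative
           (\<lambda>(du, dv, dw). gu u v w * du + gv u v w * dv + gw u v w * dw)) (at (u, v, w))"
proof -
  define fy :: "real \<Rightarrow> real \<times> real \<Rightarrow> (real \<times> real) \<Rightarrow>\<^sub>L real"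
    where "fy = (\<lambda>x y. gv x (fst y) (snd y) *\<^sub>R fst_blinfun + gw x (fst y) (snd y) *\<^sub>R snd_blinfun)"
  have fy_apply: "blinfun_apply (fy x y) = (\<lambda>(dv, dw). gv x (fst y) (snd y) * dv + gw x (fst y) (snd y) * dw)"
    for x y by (auto simp: fy_def blinfun.add_left blinfun.scaleR_left)
  have cw_slice: "continuous_on UNIV (\<lambda>(v, w). gw x v w)" for x
  proof -
    have "continuous_on UNIV ((\<lambda>(u, v, w). gw u v w) \<circ> (\<lambda>(v, w). (x, v, w)))"
      by (intro continuous_on_compose continuous_on_subset[OF cw])
        (auto simp: split_beta' intro!: continuous_intros)
    then show ?thesis by (simp add: o_def split_beta')
  qed
  have inner: "((\<lambda>y. g x (fst y) (snd y)) has_derivative blinfun_apply (fy x y)) (at y)" for x y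
  proof -
    obtain v w where y: "y = (v, w)" by (cases y)
    have "((\<lambda>(v, w). g x v w) has_derivative (\<lambda>(dv, dw). gv x v w * dv + gw x v w * dw)) (at (v, w))"
      by (rule has_derivative_from_partials2[OF dv dw cw_slice])
    then show ?thesis by (simp add: fy_apply y split_beta')
  qed
  have "continuous (at (u, v, w)) (\<lambda>p. (\<lambda>(u, v, w). gv u v w) p *\<^sub>R fst_blinfun
                                        + (\<lambda>(u, v, w). gw u v w) p *\<^sub>R snd_blinfun)"
    using cv cw by (intro continuous_intros) (simp_all add: continuous_on_eq_continuous_at)
  then have cont: "continuous (at (u, (v, w)) within UNIV \<times> UNIV) (\<lambda>(x, y). fy x y)"
    by (simp add: fy_def split_beta')
  have "((\<lambda>(x, y). g x (fst y) (snd y)) has_derivative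
          (\<lambda>(tx, ty). gu u v w * tx + blinfun_apply (fy u (v, w)) ty)) (at (u, (v, w)) within UNIV \<times> UNIV)"
    by (rule has_derivative_partialsI[where fy = fy])
      (use du[unfolded has_field_derivative_def] inner cont in auto)
  then show ?thesis by (simp add: fy_apply split_beta' algebra_simps)
qed

lemma directional_derivative_from_partials:
  fixes g gu gv gw :: "real \<Rightarrow> real \<Rightarrow> real \<Rightarrow> real"
  assumes du: "\<And>u v w. ((\<lambda>x. g x v w) has_real_derivative gu u v w) (at u)"
    and dv: "\<And>u v w. ((\<lambda>x. g u x w) has_real_derivative gv u v w) (at v)"
    and dw: "\<And>u v w. ((\<lambda>x. g u v x) has_real_derivative gw u v w) (at w)"
    and cv: "continuous_on UNIV (\<lambda>(u, v, w). gv u v w)"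
    and cw: "continuous_on UNIV (\<lambda>(u, v, w). gw u v w)"
  shows "((\<lambda>e. g (u + e * p) (v + e * q) (w + e * r)) has_real_derivative
           (p * gu u v w + q * gv u v w + r * gw u v w)) (at 0)"
proof -
  have line: "((\<lambda>e. (u + e * p, v + e * q, w + e * r)) has_derivative (\<lambda>h. (h * p, h * q, h * r))) (at 0)"
    by (auto intro!: derivative_eq_intros)
  have total: "((\<lambda>(u, v, w). g u v w) has_derivative
      (\<lambda>(du, dv, dw). gu u v w * du + gv u v w * dv + gw u v w * dw))
      (at ((\<lambda>e. (u + e * p, v + e * q, w + e * r)) 0))"
    using has_derivative_from_partials3[OF du dv dw cv cw] by simp
  have "((\<lambda>(u, v, w). g u v w) \<circ> (\<lambda>e. (u + e * p, v + e * q, w + e * r)) has_derivative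
        (\<lambda>(du, dv, dw). gu u v w * du + gv u v w * dv + gw u v w * dw) \<circ> (\<lambda>h. (h * p, h * q, h * r))) (at 0)"
    by (rule diff_chain_at[OF line total])
  then have "((\<lambda>e. g (u + e * p) (v + e * q) (w + e * r)) has_derivative
      (\<lambda>h. gu u v w * (h * p) + gv u v w * (h * q) + gw u v w * (h * r))) (at 0)"
    by (simp add: o_def)
  then show ?thesis
    unfolding has_field_derivative_def
    by (rule has_derivative_eq_rhs) (auto simp: o_def fun_eq_iff algebra_simps)
qed

text \<open>A function with continuous partial derivatives is itself continuous; this turns the
  second-order hypothesis of the theorem into continuity of the first-order partials.\<close>

lemma cont_partials_continuous:
  assumes "cont_partials f"
  shows "continuous_on UNIV (\<lambda>(u, v, w). f u v w)"
proof -
  obtain fu fv fw where d: "\<forall>u v w. ((\<lambda>x. f x v w) has_real_derivative fu u v w) (at u)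
            \<and> ((\<lambda>x. f u x w) has_real_derivative fv u v w) (at v)
            \<and> ((\<lambda>x. f u v x) has_real_derivative fw u v w) (at w)"
    and cv: "continuous_on UNIV (\<lambda>(u, v, w). fv u v w)"
    and cw: "continuous_on UNIV (\<lambda>(u, v, w). fw u v w)"
    using assms unfolding cont_partials_def by blast
  have "isCont (\<lambda>(u, v, w). f u v w) (u, v, w)" for u v w
    by (rule has_derivative_continuous[OF has_derivative_from_partials3[of f fu fv fw]])
      (use d cv cw in auto)
  then show ?thesis by (auto intro: continuous_at_imp_continuous_on)
qed

section \<open>Fractional sums and differences on the grid\<close>

lemma left_fsum_grid:
  "left_fsum a \<nu> g (a + real n) = g (a + real n) + \<nu> / Gamma (\<nu> + 1) *
     (\<Sum>i<n. gpow (real n - real i - 1 + \<nu>) (\<nu> - 1) * g (a + real i))"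
proof -
  have "nat \<lfloor>a + real n - a\<rfloor> = n" by simp
  moreover have "(\<Sum>i\<in>{0..<n}. gpow (a + real n + \<nu> - (a + real i + 1)) (\<nu> - 1) * g (a + real i)) =
        (\<Sum>i<n. gpow (real n - real i - 1 + \<nu>) (\<nu> - 1) * g (a + real i))"
    unfolding atLeast0LessThan by (intro sum.cong refl) (simp add: algebra_simps)
  ultimately show ?thesis unfolding left_fsum_def by (simp only:)
qed

lemma right_fsum_grid:
  assumes "n \<le> K"
  shows "right_fsum (a + real K) \<nu> g (a + real n) = g (a + real n) + \<nu> / Gamma (\<nu> + 1) *
     (\<Sum>i\<in>{1..K - n}. gpow (real i - 1 + \<nu>) (\<nu> - 1) * g (a + real (n + i)))"
proof -
  have dist: "a + real K - (a + real n) = real (K - n)"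
    using assms by (simp add: of_nat_diff)
  have "nat \<lfloor>a + real K - (a + real n)\<rfloor> = K - n"
    unfolding dist by simp
  moreover have "(\<Sum>i\<in>{1..K - n}. gpow (a + real n + real i + \<nu> - (a + real n + 1)) (\<nu> - 1) * g (a + real n + real i)) =
     (\<Sum>i\<in>{1..K - n}. gpow (real i - 1 + \<nu>) (\<nu> - 1) * g (a + real (n + i)))"
    by (intro sum.cong refl arg_cong2[where f="(*)"] arg_cong2[where f=gpow] arg_cong[where f=g])
      (simp_all add: algebra_simps)
  ultimately show ?thesis unfolding right_fsum_def by (simp only:)
qed

lemma left_fsum_lincomb:
  "left_fsum a \<nu> (\<lambda>t. f t + e * g t) t = left_fsum a \<nu> f t + e * left_fsum a \<nu> g t"
  unfolding left_fsum_def by (simp add: algebra_simps sum.distrib sum_distrib_left)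

lemma right_fsum_lincomb:
  "right_fsum c \<nu> (\<lambda>t. f t + e * g t) t = right_fsum c \<nu> f t + e * right_fsum c \<nu> g t"
  unfolding right_fsum_def by (simp add: algebra_simps sum.distrib sum_distrib_left)

lemma left_fdiff_lincomb:
  "left_fdiff a \<gamma> (\<lambda>t. f t + e * g t) t = left_fdiff a \<gamma> f t + e * left_fdiff a \<gamma> g t"
  unfolding left_fdiff_def left_fsum_lincomb by (simp add: algebra_simps)

lemma right_fdiff_lincomb:
  "right_fdiff c \<gamma> (\<lambda>t. f t + e * g t) t = right_fdiff c \<gamma> f t + e * right_fdiff c \<gamma> g t"
  unfolding right_fdiff_def right_fsum_lincomb by (simp add: algebra_simps)

lemma left_fdiff_scale: "left_fdiff a \<gamma> (\<lambda>t. e * g t) t = e * left_fdiff a \<gamma> g t"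
  using left_fdiff_lincomb[of a \<gamma> "\<lambda>_. 0" e g t] by (simp add: left_fdiff_def left_fsum_def)

lemma right_fdiff_scale: "right_fdiff c \<gamma> (\<lambda>t. e * g t) t = e * right_fdiff c \<gamma> g t"
  using right_fdiff_lincomb[of c \<gamma> "\<lambda>_. 0" e g t] by (simp add: right_fdiff_def right_fsum_def)

lemma Max_scale:
  assumes "finite S" "S \<noteq> {}" "0 \<le> (c::real)"
  shows "Max ((\<lambda>t. c * f t) ` S) = c * Max (f ` S)"
proof -
  have "mono ((*) c)" using assms(3) by (simp add: mono_def mult_left_mono)
  then have "c * Max (f ` S) = Max ((*) c ` f ` S)"
    by (rule mono_Max_commute) (use assms in auto)
  then show ?thesis by (simp add: image_image)
qed

lemma fnorm_scale:
  assumes "0 < k"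
  shows "fnorm a k \<alpha> \<beta> (\<lambda>t. e * g t) = \<bar>e\<bar> * fnorm a k \<alpha> \<beta> g"
proof -
  have ne: "tscale_kappa a k \<noteq> {}" and fin: "finite (tscale_kappa a k)"
    using assms by (auto simp: tscale_kappa_def)
  have "fnorm a k \<alpha> \<beta> (\<lambda>t. e * g t) =
     Max ((\<lambda>t. \<bar>e\<bar> * \<bar>g (t + 1)\<bar>) ` tscale_kappa a k)
   + Max ((\<lambda>t. \<bar>e\<bar> * \<bar>left_fdiff a \<alpha> g t\<bar>) ` tscale_kappa a k)
   + Max ((\<lambda>t. \<bar>e\<bar> * \<bar>right_fdiff (a + real k) \<beta> g t\<bar>) ` tscale_kappa a k)"
    unfolding fnorm_def left_fdiff_scale right_fdiff_scale by (simp add: abs_mult)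
  also have "\<dots> = \<bar>e\<bar> * fnorm a k \<alpha> \<beta> g"
    unfolding fnorm_def using fin ne by (simp add: Max_scale algebra_simps)
  finally show ?thesis .
qed

lemma fnorm_nonneg:
  assumes "0 < k"
  shows "0 \<le> fnorm a k \<alpha> \<beta> g"
proof -
  have t: "a \<in> tscale_kappa a k" using assms by (force simp: tscale_kappa_def)
  have "0 \<le> Max ((\<lambda>t. \<bar>h t\<bar>) ` tscale_kappa a k)" for h :: "real \<Rightarrow> real"
    using t by (intro order_trans[OF abs_ge_zero Max_ge]) (auto simp: tscale_kappa_def)
  then show ?thesis unfolding fnorm_def by (intro add_nonneg_nonneg) auto
qed

section \<open>First variation of the functional\<close>

definition along ::
  "(real \<Rightarrow> real \<Rightarrow> real \<Rightarrow> real \<Rightarrow> real) \<Rightarrow> real \<Rightarrow> nat \<Rightarrow> real \<Rightarrow> real \<Rightarrow> (real \<Rightarrow> real) \<Rightarrow> real \<Rightarrow> real"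
  where "along F a k \<alpha> \<beta> y t = F t (y (t + 1)) (left_fdiff a \<alpha> y t) (right_fdiff (a + real k) \<beta> y t)"

lemma funct_variation_has_derivative:
  fixes L Lu Lv Lw :: "real \<Rightarrow> real \<Rightarrow> real \<Rightarrow> real \<Rightarrow> real"
  assumes Lu: "\<And>t u v w. t \<in> tscale_kappa a k \<Longrightarrow>
               ((\<lambda>x. L t x v w) has_real_derivative Lu t u v w) (at u)"
    and Lv: "\<And>t u v w. t \<in> tscale_kappa a k \<Longrightarrow>
               ((\<lambda>x. L t u x w) has_real_derivative Lv t u v w) (at v)"
    and Lw: "\<And>t u v w. t \<in> tscale_kappa a k \<Longrightarrow>
               ((\<lambda>x. L t u v x) has_real_derivative Lw t u v w) (at w)"
    and cont: "\<And>t. t \<in> tscale_kappa a k \<Longrightarrow>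
               continuous_on UNIV (\<lambda>(u, v, w). Lv t u v w) \<and> continuous_on UNIV (\<lambda>(u, v, w). Lw t u v w)"
  shows "((\<lambda>e. funct L a k \<alpha> \<beta> (\<lambda>t. y t + e * \<eta> t)) has_real_derivative
            (\<Sum>i<k. \<eta> (a + real i + 1) * along Lu a k \<alpha> \<beta> y (a + real i))
          + (\<Sum>i<k. left_fdiff a \<alpha> \<eta> (a + real i) * along Lv a k \<alpha> \<beta> y (a + real i))
          + (\<Sum>i<k. right_fdiff (a + real k) \<beta> \<eta> (a + real i) * along Lw a k \<alpha> \<beta> y (a + real i))) (at 0)"
proof -
  have summand: "((\<lambda>e. L t (y (t + 1) + e * \<eta> (t + 1))
                    (left_fdiff a \<alpha> y t + e * left_fdiff a \<alpha> \<eta> t)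
                    (right_fdiff (a + real k) \<beta> y t + e * right_fdiff (a + real k) \<beta> \<eta> t))
         has_real_derivative \<eta> (t + 1) * along Lu a k \<alpha> \<beta> y t + left_fdiff a \<alpha> \<eta> t * along Lv a k \<alpha> \<beta> y t
                             + right_fdiff (a + real k) \<beta> \<eta> t * along Lw a k \<alpha> \<beta> y t) (at 0)"
    if t: "t \<in> tscale_kappa a k" for t
    unfolding along_def
    by (rule directional_derivative_from_partials[OF Lu[OF t] Lv[OF t] Lw[OF t]]) (use cont[OF t] in auto)
  have "((\<lambda>e. funct L a k \<alpha> \<beta> (\<lambda>t. y t + e * \<eta> t)) has_real_derivative
         (\<Sum>i<k. \<eta> (a + real i + 1) * along Lu a k \<alpha> \<beta> y (a + real i)
                + left_fdiff a \<alpha> \<eta> (a + real i) * along Lv a k \<alpha> \<beta> y (a + real i)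
                + right_fdiff (a + real k) \<beta> \<eta> (a + real i) * along Lw a k \<alpha> \<beta> y (a + real i))) (at 0)"
    unfolding funct_def left_fdiff_lincomb right_fdiff_lincomb
    by (intro DERIV_sum summand) (auto simp: tscale_kappa_def)
  then show ?thesis by (simp add: sum.distrib)
qed

lemma local_minimizer_first_variation:
  assumes min: "local_minimizer L a k \<alpha> \<beta> A B yt" and k: "0 < k"
    and \<eta>_ends: "\<eta> a = 0" "\<eta> (a + real k) = 0"
    and deriv: "((\<lambda>e. funct L a k \<alpha> \<beta> (\<lambda>t. yt t + e * \<eta> t)) has_real_derivative D) (at 0)"
  shows "D = 0"
proof -
  obtain \<delta> where \<delta>: "\<delta> > 0" and ya: "yt a = A" and yb: "yt (a + real k) = B"
    and local_min: "\<And>y. y a = A \<Longrightarrow> y (a + real k) = B \<Longrightarrow> fnorm a k \<alpha> \<beta> (\<lambda>t. y t - yt t) < \<delta>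
               \<Longrightarrow> funct L a k \<alpha> \<beta> yt \<le> funct L a k \<alpha> \<beta> y"
    using min unfolding local_minimizer_def by blast
  define N where "N = fnorm a k \<alpha> \<beta> \<eta>"
  have N: "0 \<le> N" unfolding N_def using k by (rule fnorm_nonneg)
  show "D = 0"
  proof (rule DERIV_local_min[OF deriv])
    show "0 < \<delta> / (N + 1)" using \<delta> N by simp
    show "\<forall>e. \<bar>0 - e\<bar> < \<delta> / (N + 1) \<longrightarrow>
            funct L a k \<alpha> \<beta> (\<lambda>t. yt t + 0 * \<eta> t) \<le> funct L a k \<alpha> \<beta> (\<lambda>t. yt t + e * \<eta> t)"
    proof (intro allI impI)
      fix e assume e: "\<bar>0 - e\<bar> < \<delta> / (N + 1)"
      have "fnorm a k \<alpha> \<beta> (\<lambda>t. (yt t + e * \<eta> t) - yt t) = \<bar>e\<bar> * N"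
        unfolding N_def by (simp add: fnorm_scale[OF k])
      also have "\<dots> \<le> \<bar>e\<bar> * (N + 1)" by (simp add: mult_left_mono)
      also have "\<dots> < \<delta>" using e N by (simp add: pos_less_divide_eq)
      finally have small: "fnorm a k \<alpha> \<beta> (\<lambda>t. (yt t + e * \<eta> t) - yt t) < \<delta>" .
      have "yt a + e * \<eta> a = A" "yt (a + real k) + e * \<eta> (a + real k) = B"
        using ya yb \<eta>_ends by simp_all
      then have "funct L a k \<alpha> \<beta> yt \<le> funct L a k \<alpha> \<beta> (\<lambda>t. yt t + e * \<eta> t)"
        using small by (rule local_min)
      then show "funct L a k \<alpha> \<beta> (\<lambda>t. yt t + 0 * \<eta> t) \<le> funct L a k \<alpha> \<beta> (\<lambda>t. yt t + e * \<eta> t)"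
        by simp
    qed
  qed
qed

section \<open>Summation by parts against a unit impulse\<close>

text \<open>The unit impulse at c.  Perturbing a function by multiples of a unit impulse at an
  interior grid point keeps the boundary values fixed.\<close>

definition kronecker :: "real \<Rightarrow> real \<Rightarrow> real"
  where "kronecker c s = (if s = c then 1 else 0)"

lemma kronecker_grid: "kronecker (a + real m) (a + real i) = (if i = m then 1 else 0)"
  by (simp add: kronecker_def)

lemma sum_mult_indicator:
  "(\<Sum>i<(n::nat). f i * (if i = m then 1 else 0)) = (if m < n then f m else (0::real))"
proof -
  have "(\<Sum>i<n. f i * (if i = m then 1 else 0)) = (\<Sum>i<n. if i = m then f i else 0)"
    by (intro sum.cong) auto
  then show ?thesis by (simp add: sum.delta')
qed

lemma sum_mult_indicator_shifted:
  assumes "n \<le> (K::nat)" "m \<le> K"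
  shows "(\<Sum>i\<in>{1..K - n}. f i * (if n + i = m then 1 else 0)) = (if n < m then f (m - n) else (0::real))"
proof (cases "n < m")
  case True
  have "(\<Sum>i\<in>{1..K - n}. f i * (if n + i = m then 1 else 0)) = (\<Sum>i\<in>{1..K - n}. if i = m - n then f i else 0)"
    using True by (intro sum.cong) auto
  also have "\<dots> = f (m - n)" using True assms by (auto simp add: sum.delta')
  finally show ?thesis using True by simp
next
  case False
  then show ?thesis by (intro trans[OF sum.neutral]) auto
qed

lemma left_fsum_kronecker:
  "left_fsum a \<nu> (kronecker (a + real m)) (a + real n) =
     (if n = m then 1 else 0) + \<nu> / Gamma (\<nu> + 1) * (if m < n then gpow (real n - real m - 1 + \<nu>) (\<nu> - 1) else 0)"
  unfolding left_fsum_grid kronecker_grid sum_mult_indicator by simp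

lemma right_fsum_kronecker:
  assumes "n \<le> K" "m \<le> K"
  shows "right_fsum (a + real K) \<nu> (kronecker (a + real m)) (a + real n) =
     (if n = m then 1 else 0) + \<nu> / Gamma (\<nu> + 1) * (if n < m then gpow (real m - real n - 1 + \<nu>) (\<nu> - 1) else 0)"
proof -
  have "right_fsum (a + real K) \<nu> (kronecker (a + real m)) (a + real n) = (if n = m then 1 else 0)
     + \<nu> / Gamma (\<nu> + 1) * (\<Sum>i\<in>{1..K - n}. gpow (real i - 1 + \<nu>) (\<nu> - 1) * (if n + i = m then 1 else 0))"
    unfolding right_fsum_grid[OF assms(1)] kronecker_grid ..
  also have "\<dots> = (if n = m then 1 else 0)
     + \<nu> / Gamma (\<nu> + 1) * (if n < m then gpow (real m - real n - 1 + \<nu>) (\<nu> - 1) else 0)"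
    using assms by (subst sum_mult_indicator_shifted) (auto simp: of_nat_diff)
  finally show ?thesis .
qed

lemma sum_shift_interval: "(\<Sum>i\<in>{1..K}. h (n + i)) = (\<Sum>l\<in>{Suc n..<n + K + 1}. (h l :: real))"
  by (rule sum.reindex_bij_witness[of _ "\<lambda>l. l - n" "\<lambda>i. n + i"]) auto

lemma sum_if_less:
  assumes "m \<le> (k::nat)"
  shows "(\<Sum>i<k. if i < m then f i else 0) = (\<Sum>i<m. (f i :: real))"
proof -
  have "(\<Sum>i<k. if i < m then f i else 0) = sum f {i\<in>{..<k}. i < m}"
    by (rule sum.inter_filter[symmetric]) simp
  also have "{i\<in>{..<k}. i < m} = {..<m}" using assms by auto
  finally show ?thesis .
qed

lemma sum_if_ge: "(\<Sum>i<(k::nat). if m \<le> i then f i else 0) = (\<Sum>i\<in>{m..<k}. (f i :: real))"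
proof -
  have "(\<Sum>i<k. if m \<le> i then f i else 0) = sum f {i\<in>{..<k}. m \<le> i}"
    by (rule sum.inter_filter[symmetric]) simp
  also have "{i\<in>{..<k}. m \<le> i} = {m..<k}" by auto
  finally show ?thesis .
qed

text \<open>Discrete fractional summation by parts, left version: F is the left fractional sum
  of a unit impulse at m (impulse plus kernel Gr after m) and R a right fractional sum of V
  with the same kernel; summing V against the forward difference of F gives the backward
  difference of R at m.\<close>

lemma sum_by_parts_left_kernel:
  fixes V Gr :: "_ \<Rightarrow> real" and c :: real
  assumes m: "0 < m" "m < k"
    and F: "\<And>n. F n = (if n = m then 1 else 0) + c * (if m < n then Gr (real n - real m - 1) else 0)"
    and R: "\<And>n. n < k \<Longrightarrow> R n = V n + c * (\<Sum>i\<in>{1..k-1-n}. Gr (real i - 1) * V (n + i))"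
  shows "(\<Sum>i<k. V i * (F (Suc i) - F i)) = R (m - 1) - R m"
proof -
  have R_shifted: "R n = V n + c * (\<Sum>l\<in>{Suc n..<k}. Gr (real l - real n - 1) * V l)" if "n < k" for n
  proof -
    have "(\<Sum>i\<in>{1..k-1-n}. Gr (real i - 1) * V (n + i)) =
          (\<Sum>i\<in>{1..k-1-n}. (\<lambda>l. Gr (real l - real n - 1) * V l) (n + i))"
      by (intro sum.cong) auto
    also have "\<dots> = (\<Sum>l\<in>{Suc n..<k}. Gr (real l - real n - 1) * V l)"
      using that by (subst sum_shift_interval) (auto intro!: sum.cong)
    finally show ?thesis using that by (simp add: R)
  qed
  have R_before: "R (m - 1) = V (m - 1) + c * (\<Sum>l\<in>{m..<k}. Gr (real l - real m) * V l)"
    using R_shifted[of "m - 1"] m by (simp add: of_nat_diff)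
  have sum_shifted: "(\<Sum>i<k. V i * F (Suc i)) = V (m - 1) + c * (\<Sum>l\<in>{m..<k}. Gr (real l - real m) * V l)"
  proof -
    have "(\<Sum>i<k. V i * F (Suc i)) = (\<Sum>i<k. if i = m - 1 then V i else 0) + c * (\<Sum>i<k. if m \<le> i then Gr (real i - real m) * V i else 0)"
      unfolding sum_distrib_left sum.distrib[symmetric]
      using m by (intro sum.cong) (auto simp: F algebra_simps)
    also have "\<dots> = V (m - 1) + c * (\<Sum>l\<in>{m..<k}. Gr (real l - real m) * V l)"
      using m by (auto simp add: sum_if_ge)
    finally show ?thesis .
  qed
  have sum_plain: "(\<Sum>i<k. V i * F i) = V m + c * (\<Sum>l\<in>{Suc m..<k}. Gr (real l - real m - 1) * V l)"
  proof -
    have "(\<Sum>i<k. V i * F i) = (\<Sum>i<k. if i = m then V i else 0) + c * (\<Sum>i<k. if Suc m \<le> i then Gr (real i - real m - 1) * V i else 0)"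
      unfolding sum_distrib_left sum.distrib[symmetric]
      using m by (intro sum.cong) (auto simp: F algebra_simps)
    also have "\<dots> = V m + c * (\<Sum>l\<in>{Suc m..<k}. Gr (real l - real m - 1) * V l)"
      using m by (auto simp add: sum_if_ge)
    finally show ?thesis .
  qed
  show ?thesis using sum_shifted sum_plain R_before R_shifted[OF m(2)] by (simp add: right_diff_distrib sum_subtractf)
qed

text \<open>Right version: H is the right fractional sum of a unit impulse at m (kernel before m)
  and P a left fractional sum of W.\<close>

lemma sum_by_parts_right_kernel:
  fixes W Gr :: "_ \<Rightarrow> real" and c :: real
  assumes m: "0 < m" "m < k"
    and H: "\<And>n. n \<le> k \<Longrightarrow> H n = (if n = m then 1 else 0) + c * (if n < m then Gr (real m - real n - 1) else 0)"
    and P: "\<And>n. P n = W n + c * (\<Sum>i<n. Gr (real n - real i - 1) * W i)"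
  shows "(\<Sum>i<k. W i * (H i - H (Suc i))) = P m - P (m - 1)"
proof -
  have sum_plain: "(\<Sum>i<k. W i * H i) = W m + c * (\<Sum>i<m. Gr (real m - real i - 1) * W i)"
  proof -
    have "(\<Sum>i<k. W i * H i) = (\<Sum>i<k. if i = m then W i else 0) + c * (\<Sum>i<k. if i < m then Gr (real m - real i - 1) * W i else 0)"
      unfolding sum_distrib_left sum.distrib[symmetric]
      using m by (intro sum.cong) (auto simp: H algebra_simps)
    also have "\<dots> = W m + c * (\<Sum>i<m. Gr (real m - real i - 1) * W i)"
      using m by (auto simp add: sum_if_less)
    finally show ?thesis .
  qed
  have sum_shifted: "(\<Sum>i<k. W i * H (Suc i)) = W (m - 1) + c * (\<Sum>i<m - 1. Gr (real (m - 1) - real i - 1) * W i)"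
  proof -
    have "(\<Sum>i<k. W i * H (Suc i)) = (\<Sum>i<k. if i = m - 1 then W i else 0) + c * (\<Sum>i<k. if i < m - 1 then Gr (real (m - 1) - real i - 1) * W i else 0)"
      unfolding sum_distrib_left sum.distrib[symmetric]
      using m by (intro sum.cong) (auto simp: H algebra_simps of_nat_diff)
    also have "\<dots> = W (m - 1) + c * (\<Sum>i<m - 1. Gr (real (m - 1) - real i - 1) * W i)"
      using m by (auto simp add: sum_if_less)
    finally show ?thesis .
  qed
  show ?thesis using sum_plain sum_shifted by (simp add: P right_diff_distrib sum_subtractf)
qed

lemma sum_kronecker_shift:
  assumes "0 < m" "m \<le> k"
  shows "(\<Sum>i<k. kronecker (a + real m) (a + real i + 1) * g (a + real i)) = g (a + real (m - 1))"
proof -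
  have "kronecker (a + real m) (a + real i + 1) = (if i = m - 1 then 1 else 0)" for i
    using assms by (auto simp: kronecker_def)
  then have "(\<Sum>i<k. kronecker (a + real m) (a + real i + 1) * g (a + real i)) =
             (\<Sum>i<k. g (a + real i) * (if i = m - 1 then 1 else 0))"
    by (simp add: mult.commute)
  also have "\<dots> = g (a + real (m - 1))"
    using assms by (simp add: sum_mult_indicator)
  finally show ?thesis .
qed

lemma sum_left_fdiff_kronecker:
  assumes m: "0 < m" "m < k"
  shows "(\<Sum>i<k. left_fdiff a \<alpha> (kronecker (a + real m)) (a + real i) * g (a + real i)) =
         right_fdiff (a + real k - 1) \<alpha> g (a + real (m - 1))"
proof -
  define \<nu> where "\<nu> = 1 - \<alpha>"
  define Gr where "Gr x = gpow (x + \<nu>) (\<nu> - 1)" for x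
  define F where "F n = left_fsum a \<nu> (kronecker (a + real m)) (a + real n)" for n
  define R where "R n = right_fsum (a + real k - 1) \<nu> g (a + real n)" for n
  have F: "F n = (if n = m then 1 else 0) + \<nu> / Gamma (\<nu> + 1) * (if m < n then Gr (real n - real m - 1) else 0)"
    for n unfolding F_def left_fsum_kronecker Gr_def ..
  have end_point: "a + real k - 1 = a + real (k - 1)" using m by (simp add: of_nat_diff)
  have R: "R n = g (a + real n) + \<nu> / Gamma (\<nu> + 1) * (\<Sum>i\<in>{1..k - 1 - n}. Gr (real i - 1) * g (a + real (n + i)))"
    if "n < k" for n
    unfolding R_def end_point using that by (subst right_fsum_grid) (auto simp: Gr_def)
  have succ: "a + real i + 1 = a + real (Suc i)" for i by simp
  have "(\<Sum>i<k. left_fdiff a \<alpha> (kronecker (a + real m)) (a + real i) * g (a + real i)) =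
        (\<Sum>i<k. g (a + real i) * (F (Suc i) - F i))"
    unfolding left_fdiff_def F_def \<nu>_def succ by (simp add: mult.commute)
  also have "\<dots> = R (m - 1) - R m"
    by (rule sum_by_parts_left_kernel[where V = "\<lambda>i. g (a + real i)", OF m F R])
  also have "\<dots> = right_fdiff (a + real k - 1) \<alpha> g (a + real (m - 1))"
    using m unfolding right_fdiff_def R_def \<nu>_def succ by simp
  finally show ?thesis .
qed

lemma sum_right_fdiff_kronecker:
  assumes m: "0 < m" "m < k"
  shows "(\<Sum>i<k. right_fdiff (a + real k) \<beta> (kronecker (a + real m)) (a + real i) * g (a + real i)) =
         left_fdiff a \<beta> g (a + real (m - 1))"
proof -
  define \<nu> where "\<nu> = 1 - \<beta>"
  define Gr where "Gr x = gpow (x + \<nu>) (\<nu> - 1)" for x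
  define H where "H n = right_fsum (a + real k) \<nu> (kronecker (a + real m)) (a + real n)" for n
  define P where "P n = left_fsum a \<nu> g (a + real n)" for n
  have H: "H n = (if n = m then 1 else 0) + \<nu> / Gamma (\<nu> + 1) * (if n < m then Gr (real m - real n - 1) else 0)"
    if "n \<le> k" for n unfolding H_def using that m by (simp add: right_fsum_kronecker Gr_def)
  have P: "P n = g (a + real n) + \<nu> / Gamma (\<nu> + 1) * (\<Sum>i<n. Gr (real n - real i - 1) * g (a + real i))"
    for n unfolding P_def left_fsum_grid Gr_def ..
  have succ: "a + real i + 1 = a + real (Suc i)" for i by simp
  have "(\<Sum>i<k. right_fdiff (a + real k) \<beta> (kronecker (a + real m)) (a + real i) * g (a + real i)) =
        (\<Sum>i<k. g (a + real i) * (H i - H (Suc i)))"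
    unfolding right_fdiff_def H_def \<nu>_def succ by (simp add: mult.commute)
  also have "\<dots> = P m - P (m - 1)"
    by (rule sum_by_parts_right_kernel[where W = "\<lambda>i. g (a + real i)", OF m H P])
  also have "\<dots> = left_fdiff a \<beta> g (a + real (m - 1))"
    using m unfolding left_fdiff_def P_def \<nu>_def succ by simp
  finally show ?thesis .
qed

theorem theoremZ:
  fixes a A B \<alpha> \<beta> :: real and k :: nat
    and L Lu Lv Lw :: "real \<Rightarrow> real \<Rightarrow> real \<Rightarrow> real \<Rightarrow> real"
    and yt :: "real \<Rightarrow> real"
  assumes k: "k \<ge> 2"
    and \<alpha>: "0 < \<alpha>" "\<alpha> \<le> 1"
    and \<beta>: "0 < \<beta>" "\<beta> \<le> 1"
    and Lu: "\<And>t u v w. t \<in> tscale_kappa a k \<Longrightarrow>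
               ((\<lambda>x. L t x v w) has_real_derivative Lu t u v w) (at u)"
    and Lv: "\<And>t u v w. t \<in> tscale_kappa a k \<Longrightarrow>
               ((\<lambda>x. L t u x w) has_real_derivative Lv t u v w) (at v)"
    and Lw: "\<And>t u v w. t \<in> tscale_kappa a k \<Longrightarrow>
               ((\<lambda>x. L t u v x) has_real_derivative Lw t u v w) (at w)"
    and C2: "\<And>t. t \<in> tscale_kappa a k \<Longrightarrow>
               cont_partials (Lu t) \<and> cont_partials (Lv t) \<and> cont_partials (Lw t)"
    and min: "local_minimizer L a k \<alpha> \<beta> A B yt"
  shows "\<forall>i \<le> k - 2. (let t = a + real i in
           Lu t (yt (t + 1)) (left_fdiff a \<alpha> yt t) (right_fdiff (a + real k) \<beta> yt t)
         + right_fdiff (a + real k - 1) \<alpha>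
             (\<lambda>s. Lv s (yt (s + 1)) (left_fdiff a \<alpha> yt s) (right_fdiff (a + real k) \<beta> yt s)) t
         + left_fdiff a \<beta>
             (\<lambda>s. Lw s (yt (s + 1)) (left_fdiff a \<alpha> yt s) (right_fdiff (a + real k) \<beta> yt s)) t
         = 0)"
proof -
  have cont: "continuous_on UNIV (\<lambda>(u, v, w). Lv t u v w) \<and> continuous_on UNIV (\<lambda>(u, v, w). Lw t u v w)"
    if "t \<in> tscale_kappa a k" for t
    using C2[OF that] by (simp add: cont_partials_continuous)
  have "along Lu a k \<alpha> \<beta> yt (a + real j)
        + right_fdiff (a + real k - 1) \<alpha> (along Lv a k \<alpha> \<beta> yt) (a + real j)
        + left_fdiff a \<beta> (along Lw a k \<alpha> \<beta> yt) (a + real j) = 0" if j: "j \<le> k - 2" for j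
  proof -
    define m where "m = Suc j"
    have m: "0 < m" "m < k" and j_eq: "j = m - 1" using j k by (auto simp: m_def)
    define \<eta> where "\<eta> = kronecker (a + real m)"
    have deriv: "((\<lambda>e. funct L a k \<alpha> \<beta> (\<lambda>t. yt t + e * \<eta> t)) has_real_derivative
            along Lu a k \<alpha> \<beta> yt (a + real j)
          + right_fdiff (a + real k - 1) \<alpha> (along Lv a k \<alpha> \<beta> yt) (a + real j)
          + left_fdiff a \<beta> (along Lw a k \<alpha> \<beta> yt) (a + real j)) (at 0)"
      using funct_variation_has_derivative[where a = a and k = k and L = L and \<alpha> = \<alpha> and \<beta> = \<beta>
          and y = yt and \<eta> = \<eta>, OF Lu Lv Lw cont]
      unfolding \<eta>_def j_eq sum_kronecker_shift[OF m(1) less_imp_le[OF m(2)]]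
        sum_left_fdiff_kronecker[OF m] sum_right_fdiff_kronecker[OF m] .
    have ends: "\<eta> a = 0" "\<eta> (a + real k) = 0"
      using m by (simp_all add: \<eta>_def kronecker_def)
    show ?thesis using local_minimizer_first_variation[OF min _ ends deriv] m by simp
  qed
  then show ?thesis by (simp add: Let_def along_def[abs_def])
qed

end
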